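(* Let $G$ be a real algebraic group and $H,L$ real algebraic subgroups, with complexifications $G_{\mathbb C},H_{\mathbb C},L_{\mathbb C}$. Put $X'_{\mathbb C}=H_{\mathbb C}\backslash G_{\mathbb C}$, $X_{\mathbb C}=G_{\mathbb C}/L_{\mathbb C}$, $$\Xi'=\{\mathcal O'\in X'_{\mathbb C}/L_{\mathbb C}:\mathcal O'(\mathbb R)\ne\emptyset\},\qquad \Xi=\{\mathcal O\in H_{\mathbb C}\backslash X_{\mathbb C}:\mathcal O(\mathbb R)\neq\emptyset\},$$ both regarded as subsets of $H_{\mathbb C}\backslash G_{\mathbb C}/L_{\mathbb C}$. If $H^1(\mathbb R,H_{\mathbb C})=1$, then $\Xi'\subset\Xi$. If moreover $H^1(\mathbb R,L_{\mathbb C})=1$, then $\Xi'=\Xi$.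
   Context: $H^1(\mathbb R,\cdot)$ denotes first Galois cohomology for $\mathrm{Gal}(\mathbb C/\mathbb R)$ acting through the given real structures; $\mathcal O(\mathbb R)$ denotes the set of real points of an orbit. An $L_{\mathbb C}$-orbit $\mathcal O'$ in $X'_{\mathbb C}$ and an $H_{\mathbb C}$-orbit $\mathcal O$ in $X_{\mathbb C}$ are identified with the same element of $H_{\mathbb C}\backslash G_{\mathbb C}/L_{\mathbb C}$ when they come from the same double coset. *)

theory Defs
  imports "HOL-Algebra.Coset"
begin

text \<open>A complex group G with a real structure sigma (an involutive group
automorphism; Gal(C/R) acts through it). Real points are sigma-fixed points.\<close>

definition real_structure :: "('a, 'b) monoid_scheme \<Rightarrow> ('a \<Rightarrow> 'a) \<Rightarrow> bool" where
  "real_structure G \<sigma> \<longleftrightarrow> \<sigma> \<in> hom G G \<and> (\<forall>x\<in>carrier G. \<sigma> (\<sigma> x) = x)"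

text \<open>First Galois cohomology H^1(R,K) is trivial: every 1-cocycle
(k with k * sigma(k) = 1) is a coboundary (k = g^-1 * sigma(g)).\<close>
definition H1_trivial :: "('a, 'b) monoid_scheme \<Rightarrow> ('a \<Rightarrow> 'a) \<Rightarrow> 'a set \<Rightarrow> bool" where
  "H1_trivial G \<sigma> K \<longleftrightarrow>
     (\<forall>k\<in>K. k \<otimes>\<^bsub>G\<^esub> \<sigma> k = \<one>\<^bsub>G\<^esub> \<longrightarrow> (\<exists>g\<in>K. k = inv\<^bsub>G\<^esub> g \<otimes>\<^bsub>G\<^esub> \<sigma> g))"

definition dcoset :: "('a, 'b) monoid_scheme \<Rightarrow> 'a set \<Rightarrow> 'a \<Rightarrow> 'a set \<Rightarrow> 'a set" where
  "dcoset G H g L = {h \<otimes>\<^bsub>G\<^esub> g \<otimes>\<^bsub>G\<^esub> l | h l. h \<in> H \<and> l \<in> L}"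

text \<open>Xi': double cosets whose L-orbit in X' = H\G (the cosets H x, x in HgL)
contains a real point, i.e. a coset fixed by the induced real structure.\<close>
definition Xi' :: "('a, 'b) monoid_scheme \<Rightarrow> ('a \<Rightarrow> 'a) \<Rightarrow> 'a set \<Rightarrow> 'a set \<Rightarrow> 'a set set" where
  "Xi' G \<sigma> H L = {dcoset G H g L | g. g \<in> carrier G \<and>
      (\<exists>x\<in>dcoset G H g L. \<sigma> ` (H #>\<^bsub>G\<^esub> x) = H #>\<^bsub>G\<^esub> x)}"

text \<open>Xi: double cosets whose H-orbit in X = G/L (the cosets x L, x in HgL)
contains a real point.\<close>
definition Xi :: "('a, 'b) monoid_scheme \<Rightarrow> ('a \<Rightarrow> 'a) \<Rightarrow> 'a set \<Rightarrow> 'a set \<Rightarrow> 'a set set" where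
  "Xi G \<sigma> H L = {dcoset G H g L | g. g \<in> carrier G \<and>
      (\<exists>x\<in>dcoset G H g L. \<sigma> ` (x <#\<^bsub>G\<^esub> L) = x <#\<^bsub>G\<^esub> L)}"

end

theory Submission
  imports Defs
begin

text \<open>Both \<open>Xi'\<close> and \<open>Xi\<close> contain every double coset \<open>H g L\<close> with a real point
\<open>x = \<sigma> x\<close>, since then \<open>H x\<close> and \<open>x L\<close> are real. Conversely, if \<open>H x\<close> is real then
\<open>\<sigma> x = h x\<close> with \<open>h\<close> a 1-cocycle in \<open>H\<close>; when \<open>H\<^sup>1(\<real>, H)\<close> is trivial, \<open>h = k\<inverse> \<sigma> k\<close> and
\<open>\<sigma> k x\<close> is a real point of the same double coset. The same argument applies to real
cosets \<open>x L\<close> when \<open>H\<^sup>1(\<real>, L)\<close> is trivial.\<close>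

definition real_dcosets :: "('a, 'b) monoid_scheme \<Rightarrow> ('a \<Rightarrow> 'a) \<Rightarrow> 'a set \<Rightarrow> 'a set \<Rightarrow> 'a set set" where
  "real_dcosets G \<sigma> H L = {dcoset G H g L | g. g \<in> carrier G \<and> (\<exists>x\<in>dcoset G H g L. \<sigma> x = x)}"

lemma (in group) dcoset_subset_carrier:
  assumes "subgroup H G" "subgroup L G" "g \<in> carrier G"
  shows "dcoset G H g L \<subseteq> carrier G"
  using assms subgroup.subset unfolding dcoset_def by blast

lemma (in group) dcoset_mult_left:
  assumes "subgroup H G" "subgroup L G" "g \<in> carrier G"
    and "h \<in> H" and "x \<in> dcoset G H g L"
  shows "h \<otimes> x \<in> dcoset G H g L"
proof -
  obtain h' l where x: "x = h' \<otimes> g \<otimes> l" and h': "h' \<in> H" and l: "l \<in> L"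
    using \<open>x \<in> dcoset G H g L\<close> unfolding dcoset_def by blast
  have "h \<in> carrier G" "h' \<in> carrier G" "l \<in> carrier G"
    using assms(1,2,4) h' l by (auto intro: subgroup.mem_carrier)
  then have "h \<otimes> x = (h \<otimes> h') \<otimes> g \<otimes> l"
    using \<open>g \<in> carrier G\<close> unfolding x by (simp add: m_assoc)
  moreover have "h \<otimes> h' \<in> H"
    using assms(1,4) h' by (rule subgroup.m_closed)
  ultimately show ?thesis
    using l unfolding dcoset_def by blast
qed

lemma (in group) dcoset_mult_right:
  assumes "subgroup H G" "subgroup L G" "g \<in> carrier G"
    and "l \<in> L" and "x \<in> dcoset G H g L"
  shows "x \<otimes> l \<in> dcoset G H g L"
proof -
  obtain h l' where x: "x = h \<otimes> g \<otimes> l'" and h: "h \<in> H" and l': "l' \<in> L"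
    using \<open>x \<in> dcoset G H g L\<close> unfolding dcoset_def by blast
  have "h \<in> carrier G" "l' \<in> carrier G" "l \<in> carrier G"
    using assms(1,2,4) h l' by (auto intro: subgroup.mem_carrier)
  then have "x \<otimes> l = h \<otimes> g \<otimes> (l' \<otimes> l)"
    using \<open>g \<in> carrier G\<close> unfolding x by (simp add: m_assoc)
  moreover have "l' \<otimes> l \<in> L"
    using assms(2) l' assms(4) by (rule subgroup.m_closed)
  ultimately show ?thesis
    using h unfolding dcoset_def by blast
qed

lemma l_coset_eq_image: "x <#\<^bsub>G\<^esub> K = (\<lambda>k. x \<otimes>\<^bsub>G\<^esub> k) ` K"
  unfolding l_coset_def by auto

lemma r_coset_eq_image: "K #>\<^bsub>G\<^esub> x = (\<lambda>k. k \<otimes>\<^bsub>G\<^esub> x) ` K"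
  unfolding r_coset_def by auto

lemma (in group) lcos_self:
  assumes "x \<in> carrier G" "subgroup H G"
  shows "x \<in> x <# H"
proof -
  have "x \<otimes> \<one> \<in> x <# H"
    using subgroup.one_closed[OF assms(2)] unfolding l_coset_eq_image by (rule imageI)
  then show ?thesis using assms(1) by simp
qed

lemma (in group_hom) image_l_coset:
  assumes "x \<in> carrier G" "K \<subseteq> carrier G"
  shows "h ` (x <#\<^bsub>G\<^esub> K) = h x <#\<^bsub>H\<^esub> h ` K"
proof -
  have "h ` (x <#\<^bsub>G\<^esub> K) = (\<lambda>k. h x \<otimes>\<^bsub>H\<^esub> h k) ` K"
    using assms by (auto simp: l_coset_eq_image image_image subset_iff intro!: image_cong)
  then show ?thesis by (simp add: l_coset_eq_image image_image)
qed

lemma (in group_hom) image_r_coset: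
  assumes "x \<in> carrier G" "K \<subseteq> carrier G"
  shows "h ` (K #>\<^bsub>G\<^esub> x) = h ` K #>\<^bsub>H\<^esub> h x"
proof -
  have "h ` (K #>\<^bsub>G\<^esub> x) = (\<lambda>k. h k \<otimes>\<^bsub>H\<^esub> h x) ` K"
    using assms by (auto simp: r_coset_eq_image image_image subset_iff intro!: image_cong)
  then show ?thesis by (simp add: r_coset_eq_image image_image)
qed

locale real_group = group G for G (structure) +
  fixes \<sigma> :: "'a \<Rightarrow> 'a"
  assumes real_structure: "real_structure G \<sigma>"
begin

sublocale sigma: group_hom G G \<sigma>
  using real_structure group_axioms
  unfolding real_structure_def group_hom_def group_hom_axioms_def by blast

lemma sigma_sigma [simp]: "x \<in> carrier G \<Longrightarrow> \<sigma> (\<sigma> x) = x"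
  using real_structure unfolding real_structure_def by blast

lemma stable_subgroup_image_eq:
  assumes "subgroup K G" "\<sigma> ` K \<subseteq> K"
  shows "\<sigma> ` K = K"
proof
  show "K \<subseteq> \<sigma> ` K"
  proof
    fix k assume "k \<in> K"
    then have "k = \<sigma> (\<sigma> k)" "\<sigma> k \<in> K"
      using assms subgroup.mem_carrier[OF assms(1)] by auto
    then show "k \<in> \<sigma> ` K" by blast
  qed
qed (fact assms(2))

lemma real_point_real_r_coset:
  assumes "subgroup H G" "\<sigma> ` H \<subseteq> H" "x \<in> carrier G" "\<sigma> x = x"
  shows "\<sigma> ` (H #> x) = H #> x"
  using assms sigma.image_r_coset[OF assms(3) subgroup.subset[OF assms(1)]]
    stable_subgroup_image_eq[OF assms(1,2)] by simp

lemma real_point_real_l_coset: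
  assumes "subgroup L G" "\<sigma> ` L \<subseteq> L" "x \<in> carrier G" "\<sigma> x = x"
  shows "\<sigma> ` (x <# L) = x <# L"
  using assms sigma.image_l_coset[OF assms(3) subgroup.subset[OF assms(1)]]
    stable_subgroup_image_eq[OF assms(1,2)] by simp

lemma real_r_coset_imp_real_point:
  assumes H: "subgroup H G" "\<sigma> ` H \<subseteq> H" and H1: "H1_trivial G \<sigma> H"
    and x: "x \<in> carrier G" and real: "\<sigma> ` (H #> x) = H #> x"
  shows "\<exists>h\<in>H. \<sigma> (h \<otimes> x) = h \<otimes> x"
proof -
  interpret H: subgroup H G by fact
  have "H #> \<sigma> x = H #> x"
    using real sigma.image_r_coset[OF x H.subset] stable_subgroup_image_eq[OF H] by simp
  then have "\<sigma> x \<in> H #> x"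
    using rcos_self[OF sigma.hom_closed[OF x] H(1)] by simp
  then obtain h where h: "h \<in> H" and sx: "\<sigma> x = h \<otimes> x"
    unfolding r_coset_def by blast
  have "x = \<sigma> (\<sigma> x)" using x by simp
  also have "\<dots> = \<sigma> (h \<otimes> x)" using sx by simp
  also have "\<dots> = (\<sigma> h \<otimes> h) \<otimes> x" using sx h x by (simp add: m_assoc)
  finally have "\<sigma> h \<otimes> h = \<one>" using h x by simp
  then have "h \<otimes> \<sigma> h = \<one>" using h by (simp add: inv_comm)
  then obtain k where k: "k \<in> H" and hk: "h = inv k \<otimes> \<sigma> k"
    using H1 h unfolding H1_trivial_def by blast
  have "\<sigma> (\<sigma> k \<otimes> x) = k \<otimes> (inv k \<otimes> \<sigma> k \<otimes> x)" using k x sx hk by simp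
  also have "\<dots> = \<sigma> k \<otimes> x" using k x by (simp add: m_assoc[symmetric])
  finally show ?thesis using k H(2) by blast
qed

lemma real_l_coset_imp_real_point:
  assumes L: "subgroup L G" "\<sigma> ` L \<subseteq> L" and H1: "H1_trivial G \<sigma> L"
    and x: "x \<in> carrier G" and real: "\<sigma> ` (x <# L) = x <# L"
  shows "\<exists>l\<in>L. \<sigma> (x \<otimes> l) = x \<otimes> l"
proof -
  interpret L: subgroup L G by fact
  have "\<sigma> x \<in> \<sigma> x <# L"
    using lcos_self[OF sigma.hom_closed[OF x] L(1)] .
  then have "\<sigma> x \<in> x <# L"
    using real sigma.image_l_coset[OF x L.subset] stable_subgroup_image_eq[OF L] by simp
  then obtain l where l: "l \<in> L" and sx: "\<sigma> x = x \<otimes> l"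
    unfolding l_coset_def by blast
  have "x = \<sigma> (\<sigma> x)" using x by simp
  also have "\<dots> = \<sigma> (x \<otimes> l)" using sx by simp
  also have "\<dots> = x \<otimes> (l \<otimes> \<sigma> l)" using sx l x by (simp add: m_assoc)
  finally have "l \<otimes> \<sigma> l = \<one>" using l x by simp
  then obtain m where m: "m \<in> L" and lm: "l = inv m \<otimes> \<sigma> m"
    using H1 l unfolding H1_trivial_def by blast
  have "\<sigma> (x \<otimes> inv m) = x \<otimes> (inv m \<otimes> \<sigma> m) \<otimes> inv (\<sigma> m)" using m x sx lm by simp
  also have "\<dots> = x \<otimes> inv m" using m x by (simp add: m_assoc)
  finally show ?thesis using m by blast
qed

context
  fixes H L
  assumes H: "subgroup H G" "\<sigma> ` H \<subseteq> H" and L: "subgroup L G" "\<sigma> ` L \<subseteq> L"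
begin

lemma real_dcosets_subset_Xi': "real_dcosets G \<sigma> H L \<subseteq> Xi' G \<sigma> H L"
  unfolding real_dcosets_def Xi'_def
  using real_point_real_r_coset[OF H] dcoset_subset_carrier[OF H(1) L(1)] by blast

lemma real_dcosets_subset_Xi: "real_dcosets G \<sigma> H L \<subseteq> Xi G \<sigma> H L"
  unfolding real_dcosets_def Xi_def
  using real_point_real_l_coset[OF L] dcoset_subset_carrier[OF H(1) L(1)] by blast

lemma Xi'_subset_real_dcosets:
  assumes "H1_trivial G \<sigma> H"
  shows "Xi' G \<sigma> H L \<subseteq> real_dcosets G \<sigma> H L"
proof
  fix D assume "D \<in> Xi' G \<sigma> H L"
  then obtain g x where D: "D = dcoset G H g L" and g: "g \<in> carrier G"
    and x: "x \<in> dcoset G H g L" and real: "\<sigma> ` (H #> x) = H #> x"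
    unfolding Xi'_def by blast
  obtain h where "h \<in> H" "\<sigma> (h \<otimes> x) = h \<otimes> x"
    using real_r_coset_imp_real_point[OF H assms _ real] x dcoset_subset_carrier[OF H(1) L(1) g]
    by blast
  moreover have "h \<otimes> x \<in> dcoset G H g L"
    using dcoset_mult_left[OF H(1) L(1) g \<open>h \<in> H\<close> x] .
  ultimately show "D \<in> real_dcosets G \<sigma> H L"
    unfolding real_dcosets_def using D g by blast
qed

lemma Xi_subset_real_dcosets:
  assumes "H1_trivial G \<sigma> L"
  shows "Xi G \<sigma> H L \<subseteq> real_dcosets G \<sigma> H L"
proof
  fix D assume "D \<in> Xi G \<sigma> H L"
  then obtain g x where D: "D = dcoset G H g L" and g: "g \<in> carrier G"
    and x: "x \<in> dcoset G H g L" and real: "\<sigma> ` (x <# L) = x <# L"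
    unfolding Xi_def by blast
  obtain l where "l \<in> L" "\<sigma> (x \<otimes> l) = x \<otimes> l"
    using real_l_coset_imp_real_point[OF L assms _ real] x dcoset_subset_carrier[OF H(1) L(1) g]
    by blast
  moreover have "x \<otimes> l \<in> dcoset G H g L"
    using dcoset_mult_right[OF H(1) L(1) g \<open>l \<in> L\<close> x] .
  ultimately show "D \<in> real_dcosets G \<sigma> H L"
    unfolding real_dcosets_def using D g by blast
qed

end

end

theorem lemmaB2:
  fixes G :: "('a, 'b) monoid_scheme" and \<sigma> :: "'a \<Rightarrow> 'a" and H L :: "'a set"
  assumes "group G"
    and "real_structure G \<sigma>"
    and "subgroup H G" and "\<sigma> ` H \<subseteq> H"
    and "subgroup L G" and "\<sigma> ` L \<subseteq> L"
    and "H1_trivial G \<sigma> H"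
  shows "Xi' G \<sigma> H L \<subseteq> Xi G \<sigma> H L \<and>
         (H1_trivial G \<sigma> L \<longrightarrow> Xi' G \<sigma> H L = Xi G \<sigma> H L)"
proof -
  interpret real_group G \<sigma>
    using assms(1,2) by (rule real_group.intro[OF _ real_group_axioms.intro])
  note stable = assms(3-6)
  have "Xi' G \<sigma> H L \<subseteq> Xi G \<sigma> H L"
    using Xi'_subset_real_dcosets[OF stable assms(7)] real_dcosets_subset_Xi[OF stable] by blast
  moreover have "Xi G \<sigma> H L \<subseteq> Xi' G \<sigma> H L" if "H1_trivial G \<sigma> L"
    using Xi_subset_real_dcosets[OF stable that] real_dcosets_subset_Xi'[OF stable] by blast
  ultimately show ?thesis by blast
qed

end
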